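(* Let $S$ be a nonempty set of graphs on $\Pi$ and $i\in[1,n]$. If the $i$-th covering numbers sequence $(s_j)_{j\ge1}$ of $S$ satisfies $s_j=n$ for some $j$, then $i$-set agreement is solvable (in finitely many rounds) on the closed-above model generated by $S$.
   Context: Fix $\Pi=\{p_1,\dots,p_n\}$. A graph is a directed graph on $\Pi$ containing all self-loops; $Out_G(p)=\{q:(p,q)\in E(G)\}$, $In_G(p)=\{q:(q,p)\in E(G)\}$, $Out_G(P)=\bigcup_{p\in P}Out_G(p)$. Computation proceeds in failure-free, communication-closed rounds: in round $r$ a graph $G_r$ is chosen and each $p$ receives the round-$r$ messages of the processes in $In_{G_r}(p)$. $\uparrow G=\{H:E(H)\supseteq E(G)\}$; the closed-above model generated by $S$ allows exactly the executions whose round graphs each lie in $\bigcup_{G\in S}\uparrow G$. In $k$-set agreement each process starts with an input from a totally ordered set $V_{in}$ and must decide a value so that every decided value is some process's input and at most $k$ distinct values are decided; it is solvable on a model if some algorithm guarantees this, with all processes deciding after some fixed finite number of rounds, in every allowed execution and input assignment. $\mathrm{eqdom}(G)=\min\{i\in[1,n]:\forall P\subseteq\Pi,\ |P|=i\Rightarrow Out_G(P)=\Pi\}$ and $\mathrm{cov}_i(G)=\min_{P\subseteq\Pi,|P|=i}|Out_G(P)|$. The $i$-th covering numbers sequence of $S$ is defined by $s_1=\min_{G\in S}\mathrm{cov}_i(G)$ and, for $k\ge1$, $s_{k+1}=n$ if $s_k\ge\max_{G\in S}\mathrm{eqdom}(G)$, and $s_{k+1}=\min_{G\in S}\mathrm{cov}_{s_k}(G)$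 otherwise. *)

theory Defs
  imports Main "HOL-Library.Cardinality"
begin

(* Processes: the elements of a finite type 'p (so \<Pi> = UNIV, n = CARD('p)).
   A graph is an edge relation containing all self-loops. *)

type_synonym 'p graph = "('p \<times> 'p) set"

definition is_graph :: "'p graph \<Rightarrow> bool" where
  "is_graph G \<longleftrightarrow> (\<forall>p. (p, p) \<in> G)"

definition Out :: "'p graph \<Rightarrow> 'p \<Rightarrow> 'p set" where
  "Out G p = {q. (p, q) \<in> G}"

definition In :: "'p graph \<Rightarrow> 'p \<Rightarrow> 'p set" where
  "In G p = {q. (q, p) \<in> G}"

definition OutS :: "'p graph \<Rightarrow> 'p set \<Rightarrow> 'p set" where
  "OutS G P = (\<Union>p\<in>P. Out G p)"

definition eqdom :: "('p::finite) graph \<Rightarrow> nat" where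
  "eqdom G = Min {i. 1 \<le> i \<and> i \<le> CARD('p) \<and> (\<forall>P::'p set. card P = i \<longrightarrow> OutS G P = UNIV)}"

definition cov :: "nat \<Rightarrow> ('p::finite) graph \<Rightarrow> nat" where
  "cov i G = Min {card (OutS G P) | P::'p set. card P = i}"

(* i-th covering numbers sequence of S, indexed from 1 (index 0 is unused). *)
fun cov_seq :: "('p::finite) graph set \<Rightarrow> nat \<Rightarrow> nat \<Rightarrow> nat" where
  "cov_seq S i 0 = 0"
| "cov_seq S i (Suc 0) = Min ((\<lambda>G. cov i G) ` S)"
| "cov_seq S i (Suc (Suc k)) =
     (if cov_seq S i (Suc k) \<ge> Max (eqdom ` S) then CARD('p)
      else Min ((\<lambda>G. cov (cov_seq S i (Suc k)) G) ` S))"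

definition closed_above :: "'p graph set \<Rightarrow> (nat \<Rightarrow> 'p graph) set" where
  "closed_above S = {Gs. \<forall>r\<ge>1. is_graph (Gs r) \<and> (\<exists>G\<in>S. G \<subseteq> Gs r)}"

record ('p, 's, 'v) algo =
  init :: "'p \<Rightarrow> 'v \<Rightarrow> 's"
  send :: "nat \<Rightarrow> 'p \<Rightarrow> 's \<Rightarrow> 's"
  trans :: "nat \<Rightarrow> 'p \<Rightarrow> 's \<Rightarrow> ('p \<Rightarrow> 's option) \<Rightarrow> 's"
  decide :: "'p \<Rightarrow> 's \<Rightarrow> 'v"

fun run :: "('p, 's, 'v) algo \<Rightarrow> ('p \<Rightarrow> 'v) \<Rightarrow> (nat \<Rightarrow> 'p graph) \<Rightarrow> nat \<Rightarrow> 'p \<Rightarrow> 's" where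
  "run A x Gs 0 p = init A p (x p)"
| "run A x Gs (Suc r) p =
     trans A (Suc r) p (run A x Gs r p)
       (\<lambda>q. if (q, p) \<in> Gs (Suc r) then Some (send A (Suc r) q (run A x Gs r q)) else None)"

definition solves_ksa :: "('p, 's, 'v) algo \<Rightarrow> nat \<Rightarrow> nat \<Rightarrow> (nat \<Rightarrow> 'p graph) set \<Rightarrow> bool" where
  "solves_ksa A R k M \<longleftrightarrow>
     (\<forall>Gs\<in>M. \<forall>x::'p \<Rightarrow> 'v.
        (\<forall>p. decide A p (run A x Gs R p) \<in> range x) \<and>
        card (range (\<lambda>p. decide A p (run A x Gs R p))) \<le> k)"

(* Full-information views, used as a sufficiently rich universal state/message type. *)
datatype ('p, 'v) view = Init 'p 'v | Step "('p, 'v) view" "'p \<Rightarrow> ('p, 'v) view option"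

end

theory Submission
  imports Defs
begin

text \<open>Every process floods its full view and decides the least input value it has seen.
Let \<open>P\<close> consist of \<open>i\<close> processes holding the \<open>i\<close> smallest inputs. By induction on the
round, at least \<open>s\<^sub>r\<close> processes have \<open>P\<close> in their causal past after round \<open>r\<close>: a set of
size \<open>s\<close> is spread to at least \<open>cov\<^sub>s(G)\<close> processes by any round graph containing \<open>G\<close>,
and to all processes once \<open>s \<ge> eqdom(G)\<close>. When \<open>s\<^sub>j = n\<close> every process has heard from \<open>P\<close>,
so its minimum is an input of \<open>P\<close>, and at most \<open>i\<close> values are decided.\<close>

primrec view_values :: "('p, 'v) view \<Rightarrow> 'v set" where
  "view_values (Init p v) = {v}"
| "view_values (Step s m) = view_values s \<union> (\<Union>q. \<Union> (set_option (map_option view_values (m q))))"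

definition min_flood :: "('p, ('p, 'v::linorder) view, 'v) algo" where
  "min_flood = \<lparr>init = Init, send = (\<lambda>r p s. s), trans = (\<lambda>r p s m. Step s m),
                decide = (\<lambda>p s. Min (view_values s))\<rparr>"

fun causal_past :: "(nat \<Rightarrow> 'p graph) \<Rightarrow> nat \<Rightarrow> 'p \<Rightarrow> 'p set" where
  "causal_past Gs 0 p = {p}"
| "causal_past Gs (Suc r) p = causal_past Gs r p \<union> (\<Union>q\<in>In (Gs (Suc r)) p. causal_past Gs r q)"

definition heard_from :: "(nat \<Rightarrow> 'p graph) \<Rightarrow> nat \<Rightarrow> 'p set \<Rightarrow> 'p set" where
  "heard_from Gs r P = {p. causal_past Gs r p \<inter> P \<noteq> {}}"

lemma view_values_run_min_flood:
  "view_values (run min_flood x Gs r p) = x ` causal_past Gs r p"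
proof (induction r arbitrary: p)
  case 0
  then show ?case by (simp add: min_flood_def)
next
  case (Suc r)
  have "view_values (run min_flood x Gs (Suc r) p) = view_values (run min_flood x Gs r p) \<union>
     (\<Union>q\<in>In (Gs (Suc r)) p. view_values (run min_flood x Gs r q))"
    by (auto simp add: min_flood_def In_def split: if_splits)
  then show ?case by (simp add: Suc.IH image_Un image_UN)
qed

lemma decide_min_flood:
  "decide min_flood p (run min_flood x Gs r p) = Min (x ` causal_past Gs r p)"
  by (simp add: view_values_run_min_flood[symmetric] min_flood_def)

lemma heard_from_0 [simp]: "heard_from Gs 0 P = P"
  by (auto simp: heard_from_def)

lemma OutS_heard_from_subset:
  "G \<subseteq> Gs (Suc r) \<Longrightarrow> OutS G (heard_from Gs r P) \<subseteq> heard_from Gs (Suc r) P"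
  by (auto simp: heard_from_def OutS_def Out_def In_def)

lemma OutS_mono: "A \<subseteq> B \<Longrightarrow> OutS G A \<subseteq> OutS G B"
  by (auto simp: OutS_def)

lemma cov_le_card_OutS:
  fixes G :: "('p::finite) graph"
  shows "cov (card Q) G \<le> card (OutS G Q)"
  unfolding cov_def by (rule Min_le) auto

lemma cov_le_card_OutS_superset:
  fixes G :: "('p::finite) graph"
  assumes "s \<le> card Q"
  shows "cov s G \<le> card (OutS G Q)"
proof -
  obtain Q' where "Q' \<subseteq> Q" "card Q' = s"
    using obtain_subset_with_card_n[OF assms] by metis
  then have "cov s G \<le> card (OutS G Q')" using cov_le_card_OutS by metis
  also have "\<dots> \<le> card (OutS G Q)" using \<open>Q' \<subseteq> Q\<close> by (intro card_mono OutS_mono) auto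
  finally show ?thesis .
qed

lemma OutS_eq_UNIV_if_eqdom_le:
  fixes G :: "('p::finite) graph"
  assumes "is_graph G" and "eqdom G \<le> card Q"
  shows "OutS G Q = UNIV"
proof -
  let ?E = "{i. 1 \<le> i \<and> i \<le> CARD('p) \<and> (\<forall>P::'p set. card P = i \<longrightarrow> OutS G P = UNIV)}"
  have "OutS G P = UNIV" if "card P = CARD('p)" for P :: "'p set"
    using that assms(1) card_eq_UNIV_imp_eq_UNIV by (fastforce simp: OutS_def Out_def is_graph_def)
  then have "CARD('p) \<in> ?E" by (simp add: Suc_leI)
  then have "eqdom G \<in> ?E" unfolding eqdom_def by (intro Min_in) auto
  moreover obtain Q' where "Q' \<subseteq> Q" "card Q' = eqdom G"
    using obtain_subset_with_card_n[OF assms(2)] by metis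
  ultimately show ?thesis using OutS_mono[OF \<open>Q' \<subseteq> Q\<close>, of G] by auto
qed

lemma cov_seq_le_card_heard_from:
  fixes S :: "('p::finite) graph set"
  assumes "\<forall>G\<in>S. is_graph G" and "Gs \<in> closed_above S" and "card P = i"
  shows "cov_seq S i (Suc k) \<le> card (heard_from Gs (Suc k) P)"
proof (induction k)
  case 0
  obtain G where G: "G \<in> S" "G \<subseteq> Gs (Suc 0)" using assms(2) by (auto simp: closed_above_def)
  have "cov_seq S i (Suc 0) \<le> cov i G" using G by simp
  also have "\<dots> \<le> card (OutS G P)" using cov_le_card_OutS assms(3) by metis
  also have "\<dots> \<le> card (heard_from Gs (Suc 0) P)"
    using OutS_heard_from_subset[of G Gs 0 P] G(2) by (simp add: card_mono)
  finally show ?case .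
next
  case (Suc k)
  obtain G where G: "G \<in> S" "G \<subseteq> Gs (Suc (Suc k))" using assms(2) by (auto simp: closed_above_def)
  let ?s = "cov_seq S i (Suc k)" and ?H = "heard_from Gs (Suc k) P"
  have spread: "OutS G ?H \<subseteq> heard_from Gs (Suc (Suc k)) P"
    using OutS_heard_from_subset[of G Gs "Suc k" P] G(2) by simp
  show ?case
  proof (cases "Max (eqdom ` S) \<le> ?s")
    case True
    have "eqdom G \<le> Max (eqdom ` S)" using G by simp
    then have "eqdom G \<le> card ?H" using True Suc.IH by linarith
    then have "OutS G ?H = UNIV" using assms(1) G(1) by (intro OutS_eq_UNIV_if_eqdom_le) auto
    then have "heard_from Gs (Suc (Suc k)) P = UNIV" using spread by auto
    then show ?thesis using True by simp
  next
    case False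
    then have "cov_seq S i (Suc (Suc k)) \<le> cov ?s G" using G by simp
    also have "\<dots> \<le> card (OutS G ?H)" by (rule cov_le_card_OutS_superset[OF Suc.IH])
    also have "\<dots> \<le> card (heard_from Gs (Suc (Suc k)) P)" using spread by (simp add: card_mono)
    finally show ?thesis .
  qed
qed

lemma exists_lowest_inputs:
  fixes x :: "'p::finite \<Rightarrow> 'v::linorder"
  assumes "k \<le> CARD('p)"
  shows "\<exists>P. card P = k \<and> (\<forall>p\<in>P. \<forall>q. q \<notin> P \<longrightarrow> x p \<le> x q)"
  using assms
proof (induction k)
  case 0
  then show ?case by (intro exI[of _ "{}"]) simp
next
  case (Suc k)
  then obtain P where P: "card P = k" "\<forall>p\<in>P. \<forall>q. q \<notin> P \<longrightarrow> x p \<le> x q" by auto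
  have "P \<noteq> UNIV" using P(1) Suc.prems by auto
  then have "- P \<noteq> {}" by auto
  then have "Min (x ` (- P)) \<in> x ` (- P)" by (intro Min_in) auto
  then obtain q where q: "q \<notin> P" "x q = Min (x ` (- P))" by auto
  then have "\<forall>p\<in>insert q P. \<forall>r. r \<notin> insert q P \<longrightarrow> x p \<le> x r" using P(2) by auto
  moreover have "card (insert q P) = Suc k" using q(1) P(1) by simp
  ultimately show ?case by blast
qed

lemma Min_image_mem_if_meets_lowest:
  fixes x :: "'p \<Rightarrow> 'v::linorder"
  assumes "finite K" and "q \<in> K" and "q \<in> P" and low: "\<forall>p\<in>P. \<forall>r. r \<notin> P \<longrightarrow> x p \<le> x r"
  shows "Min (x ` K) \<in> x ` P"
proof -
  obtain r where r: "r \<in> K" "Min (x ` K) = x r"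
  proof -
    have "Min (x ` K) \<in> x ` K" using assms(1,2) by (intro Min_in) auto
    then show thesis using that by auto
  qed
  have "x r \<le> x q" using r assms(1,2) by (metis Min_le finite_imageI imageI)
  show ?thesis
  proof (cases "r \<in> P")
    case False
    then have "x r = x q" using low assms(3) \<open>x r \<le> x q\<close> by (meson order.antisym)
    then show ?thesis using r(2) assms(3) by simp
  qed (use r(2) in simp)
qed

lemma min_flood_solves_ksa:
  fixes M :: "(nat \<Rightarrow> ('p::finite) graph) set"
  assumes "k \<le> CARD('p)"
    and "\<And>Gs P. Gs \<in> M \<Longrightarrow> card P = k \<Longrightarrow> heard_from Gs R P = UNIV"
  shows "solves_ksa (min_flood :: ('p, ('p, 'v::linorder) view, 'v) algo) R k M"
  unfolding solves_ksa_def
proof (intro ballI allI conjI)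
  fix Gs and x :: "'p \<Rightarrow> 'v"
  assume "Gs \<in> M"
  obtain P where P: "card P = k" "\<forall>p\<in>P. \<forall>q. q \<notin> P \<longrightarrow> x p \<le> x q"
    using exists_lowest_inputs[OF assms(1)] by blast
  have dec: "decide min_flood p (run min_flood x Gs R p) \<in> x ` P" for p
  proof -
    have "p \<in> heard_from Gs R P" using assms(2)[OF \<open>Gs \<in> M\<close> P(1)] by simp
    then obtain q where "q \<in> causal_past Gs R p" "q \<in> P" by (auto simp: heard_from_def)
    with P(2) show ?thesis
      unfolding decide_min_flood by (intro Min_image_mem_if_meets_lowest) simp_all
  qed
  then show "decide min_flood p (run min_flood x Gs R p) \<in> range x" for p
    by blast
  have "card (range (\<lambda>p. decide min_flood p (run min_flood x Gs R p))) \<le> card (x ` P)"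
    using dec by (intro card_mono) auto
  also have "\<dots> \<le> k" using card_image_le[of P x] P(1) by simp
  finally show "card (range (\<lambda>p. decide min_flood p (run min_flood x Gs R p))) \<le> k" .
qed

theorem theorem10:
  fixes S :: "('p::finite) graph set" and i :: nat
  assumes "S \<noteq> {}" and "\<forall>G\<in>S. is_graph G"
    and "1 \<le> i" and "i \<le> CARD('p)"
    and "\<exists>j\<ge>1. cov_seq S i j = CARD('p)"
  shows "\<exists>(A :: ('p, ('p, 'v::linorder) view, 'v) algo) R. solves_ksa A R i (closed_above S)"
proof -
  obtain j where "1 \<le> j" "cov_seq S i j = CARD('p)" using assms(5) by blast
  then obtain k where k: "cov_seq S i (Suc k) = CARD('p)" by (cases j) auto
  have "heard_from Gs (Suc k) P = UNIV" if "Gs \<in> closed_above S" and "card P = i" for Gs P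
  proof -
    have "CARD('p) \<le> card (heard_from Gs (Suc k) P)"
      using cov_seq_le_card_heard_from[OF assms(2) that, of k] k by linarith
    then show ?thesis by (simp add: card_seteq)
  qed
  then show ?thesis using min_flood_solves_ksa[OF assms(4)] by blast
qed

end
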